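(* Let $\mathbb{F}$ be a finite field of characteristic $2$ and let $\ell,r,h$ be positive integers. Let $S=\{\alpha_{i,s}\}_{i\in[\ell],s\in[r+1]}$ be a multi-set of $\ell(r+1)$ elements of $\mathbb{F}$. Let $\mathcal{C}(S,r,h)\subseteq\mathbb{F}^{\ell(r+1)}$ be the set of vectors $(x_{i,s})_{i\in[\ell],s\in[r+1]}$ satisfying $\sum_{i=1}^{\ell}\sum_{s=1}^{r+1}\alpha_{i,s}^{2^{j-1}}x_{i,s}=0$ for $j=1,\ldots,h$, and $\sum_{s=1}^{r+1}x_{i,s}=0$ for $i=1,\ldots,\ell$. Let ${\bf e}\in[r+1]^\ell$ and let $\mathcal{C}^{-{\bf e}}$ be the code obtained by puncturing $\mathcal{C}(S,r,h)$ in the positions $\{(i,{\bf e}(i))\}_{i=1}^{\ell}$ (i.e. deleting these $\ell$ coordinates). Then $\mathcal{C}^{-{\bf e}}$ is an MDS code with parameters $[\ell r,\ell r-h]$ (i.e. of minimum distance $h+1$) if and only if the multi-set $T(S,{\bf e})=\{\alpha_{i,s}+\alpha_{i,{\bf e}(i)}\}_{i\in[\ell],\,s\in[r+1]\setminus\{{\bf e}(i)\}}$ is $h$-wise independent over $\mathbb{F}_2$.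
   Context: A multi-set $T\subseteq\mathbb{F}$ is $h$-wise independent over $\mathbb{F}_2$ if every sub-multi-set of $T$ of size at most $h$ is linearly independent over $\mathbb{F}_2$. *)

theory Defs
  imports Main HOL.Vector_Spaces "HOL-Library.Function_Algebras"
begin

text \<open>Vectors over the field 'a are functions (nat \<times> nat) \<Rightarrow> 'a that vanish outside the
  relevant finite coordinate set; coordinates (i,s) are 0-indexed: i < l, s < r+1.\<close>

definition fscale :: "'a::field \<Rightarrow> ('b \<Rightarrow> 'a) \<Rightarrow> ('b \<Rightarrow> 'a)" where
  "fscale c x = (\<lambda>p. c * x p)"

definition fdim :: "('b \<Rightarrow> 'a::field) set \<Rightarrow> nat" where
  "fdim C = vector_space.dim fscale C"

definition hweight :: "('b \<Rightarrow> 'a::zero) \<Rightarrow> nat" where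
  "hweight x = card {p. x p \<noteq> 0}"

text \<open>Minimum distance of a linear code of length n; the zero code gets the
  conventional value n+1.\<close>
definition min_dist :: "nat \<Rightarrow> ('b \<Rightarrow> 'a::zero) set \<Rightarrow> nat" where
  "min_dist n C = (if C - {0} = {} then n + 1 else Min (hweight ` (C - {0})))"

definition is_mds :: "nat \<Rightarrow> nat \<Rightarrow> ('b \<Rightarrow> 'a::field) set \<Rightarrow> bool" where
  "is_mds n k C \<longleftrightarrow> fdim C = k \<and> min_dist n C = n - k + 1"

definition coords :: "nat \<Rightarrow> nat \<Rightarrow> (nat \<times> nat) set" where
  "coords l r = {(i,s). i < l \<and> s < r + 1}"

definition code_C :: "nat \<Rightarrow> nat \<Rightarrow> nat \<Rightarrow> (nat \<Rightarrow> nat \<Rightarrow> 'a::field) \<Rightarrow> (nat \<times> nat \<Rightarrow> 'a) set" where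
  "code_C l r h \<alpha> = {x. (\<forall>p. p \<notin> coords l r \<longrightarrow> x p = 0)
      \<and> (\<forall>j\<in>{1..h}. (\<Sum>(i,s)\<in>coords l r. \<alpha> i s ^ (2 ^ (j - 1)) * x (i,s)) = 0)
      \<and> (\<forall>i<l. (\<Sum>s<r+1. x (i,s)) = 0)}"

definition punct_coords :: "nat \<Rightarrow> nat \<Rightarrow> (nat \<Rightarrow> nat) \<Rightarrow> (nat \<times> nat) set" where
  "punct_coords l r e = {(i,s). i < l \<and> s < r + 1 \<and> s \<noteq> e i}"

definition puncture :: "(nat \<times> nat) set \<Rightarrow> (nat \<times> nat \<Rightarrow> 'a::zero) set \<Rightarrow> (nat \<times> nat \<Rightarrow> 'a) set" where
  "puncture P C = (\<lambda>x. \<lambda>p. if p \<in> P then x p else 0) ` C"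

text \<open>Linear independence over F_2 (the prime subfield {0,1} of a field of characteristic 2)
  of the multiset given by the family v on index set J.\<close>
definition f2_indep :: "('i \<Rightarrow> 'a::field) \<Rightarrow> 'i set \<Rightarrow> bool" where
  "f2_indep v J \<longleftrightarrow> (\<forall>c. (\<forall>t\<in>J. c t \<in> {0,1}) \<longrightarrow> (\<Sum>t\<in>J. c t * v t) = 0 \<longrightarrow> (\<forall>t\<in>J. c t = 0))"

definition hwise_indep :: "nat \<Rightarrow> ('i \<Rightarrow> 'a::field) \<Rightarrow> 'i set \<Rightarrow> bool" where
  "hwise_indep h v I \<longleftrightarrow> (\<forall>J\<subseteq>I. card J \<le> h \<longrightarrow> f2_indep v J)"

end

theory Submission
  imports Defs "HOL-Computational_Algebra.Primes"
begin

text \<open>Every row of a codeword sums to zero and squaring is additive in characteristic 2, so each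
  check \<open>\<Sum> \<alpha> i s ^ 2 ^ j * x (i, s) = 0\<close> can be rewritten without the coordinates \<open>(i, e i)\<close> as
  \<open>\<Sum> \<beta> t ^ 2 ^ j * x t = 0\<close>, where \<open>\<beta> (i, s) = \<alpha> i s + \<alpha> i (e i)\<close>. Hence the punctured code is the
  code of length \<open>n = l * r\<close> whose parity-check matrix is the Moore matrix \<open>\<beta> t ^ 2 ^ j\<close>, \<open>j < h\<close>.

  A code cut out by \<open>h \<le> n\<close> checks is MDS with parameters \<open>[n, n - h]\<close> iff all its nonzero words
  have weight \<open>> h\<close>: then, for an \<open>h\<close>-set \<open>Q\<close>, every coordinate \<open>r \<notin> Q\<close> carries a word supported
  on \<open>insert r Q\<close> with a 1 at \<open>r\<close>, and these words form a basis of words of weight \<open>h + 1\<close>.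

  Finally, a nonzero word of weight at most \<open>h\<close> exists iff at most \<open>h\<close> of the \<open>\<beta> t\<close> are linearly
  dependent over \<open>\<bbbF>\<^sub>2\<close>: an \<open>\<bbbF>\<^sub>2\<close>-relation is itself such a word because \<open>c ^ 2 ^ j = c\<close> for
  \<open>c \<in> {0, 1}\<close>, and conversely the Moore matrix of \<open>\<bbbF>\<^sub>2\<close>-independent elements has trivial kernel.\<close>

interpretation fun_vs: vector_space "fscale :: 'a::field \<Rightarrow> ('b \<Rightarrow> 'a) \<Rightarrow> 'b \<Rightarrow> 'a"
  by unfold_locales (auto simp: fscale_def fun_eq_iff algebra_simps)

lemma sum_fun_apply: "(sum f R) p = (\<Sum>r\<in>R. f r p)"
  by (induction R rule: infinite_finite_induct) auto

lemma fdim_eq_card_of_unit_vectors: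
  fixes C :: "('i \<Rightarrow> 'a::field) set"
  assumes C: "fun_vs.subspace C" and R: "finite R"
    and b_in: "\<And>r. r \<in> R \<Longrightarrow> b r \<in> C"
    and b_unit: "\<And>r r'. r \<in> R \<Longrightarrow> r' \<in> R \<Longrightarrow> b r r' = (if r' = r then 1 else 0)"
    and determined: "\<And>y. y \<in> C \<Longrightarrow> \<forall>r\<in>R. y r = 0 \<Longrightarrow> y = 0"
  shows "fdim C = card R"
proof -
  have eval: "(\<Sum>r\<in>R. fscale (u r) (b r)) r' = u r'" if "r' \<in> R" for u r'
  proof -
    have "(\<Sum>r\<in>R. fscale (u r) (b r)) r' = (\<Sum>r\<in>R. if r = r' then u r else 0)"
      unfolding sum_fun_apply fscale_def using that by (intro sum.cong) (auto simp: b_unit)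
    also have "\<dots> = u r'" using R that by simp
    finally show ?thesis .
  qed
  have inj: "inj_on b R"
    by (rule inj_onI) (metis b_unit one_neq_zero)
  have "fun_vs.dim C = card (b ` R)"
  proof (rule fun_vs.dim_unique)
    show "b ` R \<subseteq> C" using b_in by blast
    show "C \<subseteq> fun_vs.span (b ` R)"
    proof
      fix y assume y: "y \<in> C"
      let ?z = "\<Sum>r\<in>R. fscale (y r) (b r)"
      have "?z \<in> C"
        by (rule fun_vs.subspace_sum[OF C]) (rule fun_vs.subspace_scale[OF C b_in])
      then have "y - ?z \<in> C" by (rule fun_vs.subspace_diff[OF C y])
      moreover have "\<forall>r\<in>R. (y - ?z) r = 0" using eval by simp
      ultimately have "y - ?z = 0" by (rule determined)
      moreover have "?z \<in> fun_vs.span (b ` R)"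
        by (intro fun_vs.span_sum fun_vs.span_scale fun_vs.span_base imageI)
      ultimately show "y \<in> fun_vs.span (b ` R)" by simp
    qed
    show "fun_vs.independent (b ` R)"
    proof
      assume "fun_vs.dependent (b ` R)"
      then obtain u where u: "\<exists>v\<in>b ` R. u v \<noteq> 0" "(\<Sum>v\<in>b ` R. fscale (u v) v) = 0"
        using fun_vs.dependent_finite[of "b ` R"] R by auto
      have "(\<Sum>r\<in>R. fscale (u (b r)) (b r)) = 0"
        using u(2) sum.reindex[OF inj, of "\<lambda>v. fscale (u v) v"] by (simp add: comp_def)
      then have "u (b r) = 0" if "r \<in> R" for r
        using eval[OF that, of "\<lambda>r. u (b r)"] by simp
      with u(1) show False by blast
    qed
  qed (rule refl)
  then show ?thesis by (simp add: fdim_def card_image[OF inj])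
qed

lemma hweight_le_card:
  assumes "finite S" "\<forall>p. p \<notin> S \<longrightarrow> y p = 0"
  shows "hweight y \<le> card S"
  unfolding hweight_def using assms by (intro card_mono) auto

lemma min_dist_le_hweight:
  assumes "finite (hweight ` C)" "y \<in> C" "y \<noteq> 0"
  shows "min_dist n C \<le> hweight y"
proof -
  have "Min (hweight ` (C - {0})) \<le> hweight y"
    using assms by (intro Min_le) (auto intro: finite_subset[OF image_mono])
  with assms(2,3) show ?thesis by (auto simp: min_dist_def)
qed

lemma min_dist_eqI:
  assumes "finite (hweight ` C)" "y \<in> C" "y \<noteq> 0" "hweight y = d"
    and "\<And>z. z \<in> C \<Longrightarrow> z \<noteq> 0 \<Longrightarrow> d \<le> hweight z"
  shows "min_dist n C = d"
proof -
  have "Min (hweight ` (C - {0})) = d"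
    using assms by (intro Min_eqI) (auto intro: finite_subset[OF image_mono])
  with assms(2,3) show ?thesis by (auto simp: min_dist_def)
qed

definition check_code :: "'i set \<Rightarrow> (nat \<Rightarrow> 'i \<Rightarrow> 'a::field) \<Rightarrow> nat \<Rightarrow> ('i \<Rightarrow> 'a) set" where
  "check_code P H m =
     {y. (\<forall>p. p \<notin> P \<longrightarrow> y p = 0) \<and> (\<forall>j<m. (\<Sum>t\<in>P. H j t * y t) = 0)}"

lemma subspace_check_code: "fun_vs.subspace (check_code P H m)"
  by (auto simp: fun_vs.subspace_def check_code_def fscale_def algebra_simps sum.distrib
      simp flip: sum_distrib_left)

lemma check_code_mono:
  assumes "finite P" "Q \<subseteq> P"
  shows "check_code Q H m \<subseteq> check_code P H m"
proof
  fix y assume y: "y \<in> check_code Q H m"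
  have "(\<Sum>t\<in>P. H j t * y t) = (\<Sum>t\<in>Q. H j t * y t)" for j
    using assms y by (intro sum.mono_neutral_right) (auto simp: check_code_def)
  with y assms(2) show "y \<in> check_code P H m" by (auto simp: check_code_def)
qed

lemma hweight_check_code_le:
  assumes "finite P" "y \<in> check_code P H m"
  shows "hweight y \<le> card P"
  using assms by (intro hweight_le_card) (auto simp: check_code_def)

lemma finite_hweight_check_code:
  assumes "finite P"
  shows "finite (hweight ` check_code P H m)"
proof (rule finite_subset)
  show "hweight ` check_code P H m \<subseteq> {..card P}"
    using hweight_check_code_le[OF assms] by auto
qed simp

text \<open>Gaussian elimination: solve the last equation for a variable it involves and recurse.\<close>
lemma check_code_nontrivial:
  assumes "finite P" "m < card P"
  shows "\<exists>y\<in>check_code P H m. y \<noteq> 0"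
  using assms
proof (induction m arbitrary: P H)
  case 0
  then obtain v where "v \<in> P" by fastforce
  then show ?case
    by (intro bexI[of _ "\<lambda>w. if w = v then 1 else 0"]) (auto simp: check_code_def fun_eq_iff)
next
  case (Suc m)
  show ?case
  proof (cases "\<forall>v\<in>P. H m v = 0")
    case True
    have "m < card P" using Suc.prems(2) by simp
    then obtain y where y: "y \<in> check_code P H m" "y \<noteq> 0"
      using Suc.IH[OF Suc.prems(1)] by blast
    with True have "y \<in> check_code P H (Suc m)" by (auto simp: check_code_def less_Suc_eq)
    with y(2) show ?thesis by blast
  next
    case False
    then obtain v where v: "v \<in> P" "H m v \<noteq> 0" by blast
    define H' where "H' j w = H j w - H j v * H m w / H m v" for j w
    have "finite (P - {v})" "m < card (P - {v})" using Suc.prems v by auto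
    then obtain y' where y': "y' \<in> check_code (P - {v}) H' m" "y' \<noteq> 0"
      using Suc.IH by blast
    define S where "S j = (\<Sum>w\<in>P - {v}. H j w * y' w)" for j
    define y where "y = y'(v := - S m / H m v)"
    have y_eq: "(\<Sum>w\<in>P. H j w * y w) = S j - H j v / H m v * S m" for j
      using Suc.prems(1) v(1) y'(1)
      by (simp add: sum.remove y_def S_def check_code_def cong: sum.cong) (simp add: field_simps)
    have "(\<Sum>w\<in>P - {v}. H' j w * y' w) = S j - H j v / H m v * S m" for j
      by (simp add: H'_def S_def left_diff_distrib sum_subtractf sum_distrib_left algebra_simps)
    then have "S j - H j v / H m v * S m = 0" if "j < m" for j
      using y'(1) that by (simp add: check_code_def)
    then have "(\<Sum>w\<in>P. H j w * y w) = 0" if "j < Suc m" for j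
      using that v(2) by (cases "j = m") (auto simp: y_eq)
    moreover have "\<forall>p. p \<notin> P \<longrightarrow> y p = 0"
      using y'(1) v(1) by (auto simp: check_code_def y_def)
    ultimately have "y \<in> check_code P H (Suc m)" by (simp add: check_code_def)
    moreover have "y \<noteq> 0" using y' by (auto simp: check_code_def y_def fun_eq_iff)
    ultimately show ?thesis by blast
  qed
qed

lemma small_support_eq_0:
  assumes heavy: "\<forall>y\<in>C. y \<noteq> 0 \<longrightarrow> m < hweight y" and y: "y \<in> C"
    and S: "finite S" "card S \<le> m" "\<forall>p. p \<notin> S \<longrightarrow> y p = 0"
  shows "y = 0"
proof (rule ccontr)
  assume "y \<noteq> 0"
  with heavy y have "m < hweight y" by blast
  with hweight_le_card[OF S(1,3)] S(2) show False by simp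
qed

lemma check_code_unit_word:
  assumes P: "finite P" and Q: "Q \<subseteq> P" "card Q = m" and r: "r \<in> P - Q"
    and heavy: "\<forall>y\<in>check_code P H m. y \<noteq> 0 \<longrightarrow> m < hweight y"
  shows "\<exists>x\<in>check_code P H m. (\<forall>p. p \<notin> insert r Q \<longrightarrow> x p = 0) \<and> x r = 1"
proof -
  have finQ: "finite Q" using P Q(1) finite_subset by blast
  then obtain y where y: "y \<in> check_code (insert r Q) H m" "y \<noteq> 0"
    using check_code_nontrivial[of "insert r Q" m H] Q(2) r by auto
  have yP: "y \<in> check_code P H m"
    using check_code_mono[OF P] Q(1) r y(1) by blast
  have supp: "\<forall>p. p \<notin> insert r Q \<longrightarrow> y p = 0" using y(1) by (simp add: check_code_def)
  have "y r \<noteq> 0"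
  proof
    assume "y r = 0"
    with supp have "\<forall>p. p \<notin> Q \<longrightarrow> y p = 0" by auto
    with small_support_eq_0[OF heavy yP finQ] Q(2) y(2) show False by simp
  qed
  define x where "x = fscale (1 / y r) y"
  have "x \<in> check_code P H m"
    unfolding x_def by (rule fun_vs.subspace_scale[OF subspace_check_code yP])
  moreover have "\<forall>p. p \<notin> insert r Q \<longrightarrow> x p = 0" "x r = 1"
    using supp \<open>y r \<noteq> 0\<close> by (simp_all add: x_def fscale_def)
  ultimately show ?thesis by blast
qed

lemma fdim_check_code_heavy:
  assumes P: "finite P" "card P = n" and m: "m \<le> n"
    and heavy: "\<forall>y\<in>check_code P H m. y \<noteq> 0 \<longrightarrow> m < hweight y"
  shows "fdim (check_code P H m) = n - m"
proof -
  let ?C = "check_code P H m"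
  obtain Q where Q: "Q \<subseteq> P" "card Q = m"
    using obtain_subset_with_card_n[of m P] P m by auto
  have finQ: "finite Q" using P(1) Q(1) finite_subset by blast
  define R where "R = P - Q"
  have R: "finite R" "card R = n - m"
    using P Q finQ by (simp_all add: R_def card_Diff_subset)
  have "\<forall>r\<in>R. \<exists>x. x \<in> ?C \<and> (\<forall>p. p \<notin> insert r Q \<longrightarrow> x p = 0) \<and> x r = 1"
    using check_code_unit_word[OF P(1) Q _ heavy] by (simp add: R_def Bex_def)
  then obtain b where b: "\<forall>r\<in>R. b r \<in> ?C \<and> (\<forall>p. p \<notin> insert r Q \<longrightarrow> b r p = 0) \<and> b r r = 1"
    by (rule bchoice[elim_format]) blast
  have "fdim ?C = card R"
  proof (rule fdim_eq_card_of_unit_vectors[OF subspace_check_code R(1)])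
    show "b r \<in> ?C" if "r \<in> R" for r using b that by blast
    show "b r r' = (if r' = r then 1 else 0)" if "r \<in> R" "r' \<in> R" for r r'
      using b that by (auto simp: R_def)
    show "y = 0" if "y \<in> ?C" "\<forall>r\<in>R. y r = 0" for y
    proof (rule small_support_eq_0[OF heavy that(1) finQ])
      show "\<forall>p. p \<notin> Q \<longrightarrow> y p = 0"
        using that by (auto simp: R_def check_code_def)
    qed (simp add: Q(2))
  qed
  with R(2) show ?thesis by simp
qed

lemma min_dist_check_code_heavy:
  assumes P: "finite P" "card P = n" and m: "m \<le> n"
    and heavy: "\<forall>y\<in>check_code P H m. y \<noteq> 0 \<longrightarrow> m < hweight y"
  shows "min_dist n (check_code P H m) = m + 1"
proof (cases "m = n")
  case True
  have "y = 0" if "y \<in> check_code P H m" for y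
    by (rule small_support_eq_0[OF heavy that P(1)]) (use that True P(2) in \<open>simp_all add: check_code_def\<close>)
  then show ?thesis using True by (auto simp: min_dist_def)
next
  case False
  obtain Q where Q: "Q \<subseteq> P" "card Q = m"
    using obtain_subset_with_card_n[of m P] P m by auto
  have finQ: "finite Q" using P(1) Q(1) finite_subset by blast
  have "Q \<noteq> P" using Q(2) P(2) False by blast
  then obtain r where r: "r \<in> P - Q" using Q(1) by blast
  then obtain x where x: "x \<in> check_code P H m" "\<forall>p. p \<notin> insert r Q \<longrightarrow> x p = 0" "x r = 1"
    using check_code_unit_word[OF P(1) Q _ heavy] by blast
  have "x \<noteq> 0"
  proof
    assume "x = 0"
    with x(3) show False by simp
  qed
  have "hweight x \<le> card (insert r Q)" by (rule hweight_le_card[OF _ x(2)]) (simp add: finQ)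
  also have "\<dots> = m + 1" using r finQ Q(2) by simp
  finally have "hweight x \<le> m + 1" .
  moreover have "m < hweight x" using heavy x(1) \<open>x \<noteq> 0\<close> by blast
  ultimately have "hweight x = m + 1" by simp
  then show ?thesis
  proof (rule min_dist_eqI[OF finite_hweight_check_code[OF P(1)] x(1) \<open>x \<noteq> 0\<close>])
    fix z assume "z \<in> check_code P H m" "z \<noteq> 0"
    with heavy have "m < hweight z" by blast
    then show "m + 1 \<le> hweight z" by simp
  qed
qed

lemma is_mds_check_code_iff:
  assumes P: "finite P" "card P = n" and m: "m \<le> n"
  shows "is_mds n (n - m) (check_code P H m) \<longleftrightarrow>
         (\<forall>y\<in>check_code P H m. y \<noteq> 0 \<longrightarrow> m < hweight y)"
proof
  assume "is_mds n (n - m) (check_code P H m)"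
  then have md: "min_dist n (check_code P H m) = m + 1" using m by (simp add: is_mds_def)
  show "\<forall>y\<in>check_code P H m. y \<noteq> 0 \<longrightarrow> m < hweight y"
  proof (intro ballI impI)
    fix y assume "y \<in> check_code P H m" "y \<noteq> 0"
    then have "min_dist n (check_code P H m) \<le> hweight y"
      by (rule min_dist_le_hweight[OF finite_hweight_check_code[OF P(1)]])
    with md show "m < hweight y" by simp
  qed
next
  assume heavy: "\<forall>y\<in>check_code P H m. y \<noteq> 0 \<longrightarrow> m < hweight y"
  show "is_mds n (n - m) (check_code P H m)"
    using fdim_check_code_heavy[OF P m heavy] min_dist_check_code_heavy[OF P m heavy] m
    by (simp add: is_mds_def)
qed

lemma f2_indepD:
  assumes "f2_indep v J" "\<forall>t\<in>J. c t \<in> {0, 1}" "(\<Sum>t\<in>J. c t * v t) = 0" "t \<in> J"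
  shows "c t = 0"
  using assms unfolding f2_indep_def by blast

lemma f2_indep_subset:
  assumes "f2_indep v J" "K \<subseteq> J" "finite J"
  shows "f2_indep v K"
  unfolding f2_indep_def
proof (intro allI impI)
  fix c assume c01: "\<forall>t\<in>K. c t \<in> {0, 1}" and sum0: "(\<Sum>t\<in>K. c t * v t) = 0"
  define c' where "c' t = (if t \<in> K then c t else 0)" for t
  have "(\<Sum>t\<in>J. c' t * v t) = (\<Sum>t\<in>K. c t * v t)"
    using assms(2,3) by (intro sum.mono_neutral_cong_right) (auto simp: c'_def)
  moreover have "\<forall>t\<in>J. c' t \<in> {0, 1}" using c01 by (auto simp: c'_def)
  ultimately have "c' t = 0" if "t \<in> J" for t using f2_indepD[OF assms(1)] sum0 that by simp
  then show "\<forall>t\<in>K. c t = 0" using assms(2) unfolding c'_def by (metis subsetD)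
qed

lemma sum_f2_coeffs_power:
  fixes v :: "'i \<Rightarrow> 'a::field"
  assumes "CHAR('a) = 2" "\<forall>t\<in>J. c t \<in> {0, 1}"
  shows "(\<Sum>t\<in>J. c t * v t ^ 2 ^ k) = (\<Sum>t\<in>J. c t * v t) ^ 2 ^ k"
proof -
  have "(\<Sum>t\<in>J. c t * v t ^ 2 ^ k) = (\<Sum>t\<in>J. (c t * v t) ^ 2 ^ k)"
    using assms(2) by (intro sum.cong) (auto simp: power_mult_distrib)
  also have "\<dots> = (\<Sum>t\<in>J. c t * v t) ^ 2 ^ k"
    using assms(1) by (intro freshmans_dream_sum'[symmetric]) simp_all
  finally show ?thesis .
qed

lemma sum_frobenius_defect:
  fixes a w :: "'i \<Rightarrow> 'a::field"
  assumes "CHAR('a) = 2" "(\<Sum>t\<in>J. a t * w t) = 0" "(\<Sum>t\<in>J. a t * w t ^ 2) = 0"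
  shows "(\<Sum>t\<in>J. (a t - a t ^ 2) * w t ^ 2) = 0"
proof -
  have "(\<Sum>t\<in>J. a t ^ 2 * w t ^ 2) = (\<Sum>t\<in>J. a t * w t) ^ 2"
    using assms(1) by (simp add: freshmans_dream_sum power_mult_distrib)
  with assms(2,3) show ?thesis by (simp add: left_diff_distrib sum_subtractf)
qed

text \<open>Moore determinant argument: after normalising some coefficient to 1, the coefficients
  \<open>a t - a t\<^sup>2\<close> solve the same system with one equation fewer, shifted by one Frobenius power,
  and vanish at that coordinate; by induction they vanish, so all coefficients lie in \<open>{0,1}\<close>,
  and then the first equation is the \<open>2\<^sup>k\<close>-th power of an \<open>\<bbbF>\<^sub>2\<close>-relation among the \<open>v t\<close>.\<close>
lemma moore_system_trivial:
  fixes v :: "'i \<Rightarrow> 'a::field"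
  assumes char: "CHAR('a) = 2"
  shows "finite J \<Longrightarrow> card J \<le> h \<Longrightarrow> f2_indep v J \<Longrightarrow>
     \<forall>j<h. (\<Sum>t\<in>J. a t * v t ^ 2 ^ (k + j)) = 0 \<Longrightarrow> \<forall>t\<in>J. a t = 0"
proof (induction h arbitrary: J a k)
  case 0
  then show ?case by simp
next
  case (Suc h)
  show ?case
  proof (rule ccontr)
    assume "\<not> (\<forall>t\<in>J. a t = 0)"
    then obtain t0 where t0: "t0 \<in> J" "a t0 \<noteq> 0" by blast
    define a' where "a' t = a t / a t0" for t
    have a'_t0: "a' t0 = 1" using t0 by (simp add: a'_def)
    have eq': "(\<Sum>t\<in>J. a' t * v t ^ 2 ^ (k + j)) = 0" if "j < Suc h" for j
      using Suc.prems(4) that by (simp add: a'_def flip: sum_divide_distrib)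
    define b where "b t = a' t - a' t ^ 2" for t
    have "\<forall>j<h. (\<Sum>t\<in>J - {t0}. b t * v t ^ 2 ^ (Suc k + j)) = 0"
    proof (intro allI impI)
      fix j assume "j < h"
      have square: "(v t ^ 2 ^ (k + j)) ^ 2 = v t ^ 2 ^ (Suc k + j)" for t
        by (metis add_Suc power_Suc2 power_mult)
      have "(\<Sum>t\<in>J. b t * v t ^ 2 ^ (Suc k + j)) = 0"
        using sum_frobenius_defect[OF char, where a = a' and w = "\<lambda>t. v t ^ 2 ^ (k + j)"]
          eq'[of j] eq'[of "Suc j"] \<open>j < h\<close> by (simp add: b_def square)
      moreover have "b t0 = 0" using a'_t0 by (simp add: b_def)
      ultimately show "(\<Sum>t\<in>J - {t0}. b t * v t ^ 2 ^ (Suc k + j)) = 0"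
        using t0(1) Suc.prems(1) by (simp add: sum.remove)
    qed
    moreover have "f2_indep v (J - {t0})"
      by (rule f2_indep_subset[OF Suc.prems(3) _ Suc.prems(1)]) blast
    moreover have "finite (J - {t0})" "card (J - {t0}) \<le> h"
      using Suc.prems(1,2) t0(1) by auto
    ultimately have "\<forall>t\<in>J - {t0}. b t = 0"
      using Suc.IH[where J = "J - {t0}" and a = b and k = "Suc k"] by blast
    then have a'01: "\<forall>t\<in>J. a' t \<in> {0, 1}"
      using a'_t0 by (auto simp: b_def power2_eq_square right_diff_distrib[symmetric])
    have "(\<Sum>t\<in>J. a' t * v t) ^ 2 ^ k = 0"
      using eq'[of 0] sum_f2_coeffs_power[OF char a'01] by simp
    then have "(\<Sum>t\<in>J. a' t * v t) = 0" by simp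
    then have "a' t0 = 0" using f2_indepD[OF Suc.prems(3) a'01] t0(1) by simp
    with a'_t0 show False by simp
  qed
qed

lemma f2_relation_in_check_code:
  fixes v :: "'i \<Rightarrow> 'a::field"
  assumes char: "CHAR('a) = 2" and J: "finite P" "J \<subseteq> P"
    and c01: "\<forall>t\<in>J. c t \<in> {0, 1}" and rel: "(\<Sum>t\<in>J. c t * v t) = 0"
  shows "(\<lambda>t. if t \<in> J then c t else 0) \<in> check_code P (\<lambda>j t. v t ^ 2 ^ j) m"
proof -
  let ?y = "\<lambda>t. if t \<in> J then c t else 0"
  have "(\<Sum>t\<in>J. v t ^ 2 ^ j * ?y t) = (\<Sum>t\<in>J. c t * v t ^ 2 ^ j)" for j
    by (intro sum.cong) simp_all
  then have "?y \<in> check_code J (\<lambda>j t. v t ^ 2 ^ j) m"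
    using sum_f2_coeffs_power[OF char c01] rel by (simp add: check_code_def)
  then show ?thesis using check_code_mono[OF J] by blast
qed

lemma heavy_imp_hwise_indep:
  fixes v :: "'i \<Rightarrow> 'a::field"
  assumes char: "CHAR('a) = 2" and P: "finite P"
    and heavy: "\<forall>y\<in>check_code P (\<lambda>j t. v t ^ 2 ^ j) m. y \<noteq> 0 \<longrightarrow> m < hweight y"
  shows "hwise_indep m v P"
  unfolding hwise_indep_def f2_indep_def
proof (intro allI impI ballI)
  fix J c t
  assume J: "J \<subseteq> P" "card J \<le> m" and c01: "\<forall>t\<in>J. c t \<in> {0, 1}"
    and rel: "(\<Sum>t\<in>J. c t * v t) = 0" and t: "t \<in> J"
  have finJ: "finite J" using P J(1) finite_subset by blast
  have "(\<lambda>t. if t \<in> J then c t else 0) = 0"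
    by (rule small_support_eq_0[OF heavy f2_relation_in_check_code[OF char P J(1) c01 rel] finJ J(2)]) simp
  then show "c t = 0" using t by (drule_tac fun_cong[of _ _ t]) simp
qed

lemma hwise_indep_imp_heavy:
  fixes v :: "'i \<Rightarrow> 'a::field"
  assumes char: "CHAR('a) = 2" and P: "finite P" and indep: "hwise_indep m v P"
    and y: "y \<in> check_code P (\<lambda>j t. v t ^ 2 ^ j) m" "y \<noteq> 0"
  shows "m < hweight y"
proof (rule ccontr)
  assume light: "\<not> m < hweight y"
  define J where "J = {p. y p \<noteq> 0}"
  have JP: "J \<subseteq> P" using y(1) by (auto simp: J_def check_code_def)
  have finJ: "finite J" using P JP finite_subset by blast
  have cardJ: "card J \<le> m" using light by (simp add: J_def hweight_def)
  have "f2_indep v J" using indep JP cardJ by (simp add: hwise_indep_def)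
  moreover have "\<forall>j<m. (\<Sum>t\<in>J. y t * v t ^ 2 ^ (0 + j)) = 0"
  proof (intro allI impI)
    fix j assume "j < m"
    have "(\<Sum>t\<in>J. y t * v t ^ 2 ^ (0 + j)) = (\<Sum>t\<in>P. v t ^ 2 ^ j * y t)"
      using P JP by (intro sum.mono_neutral_cong_left) (auto simp: J_def)
    with y(1) \<open>j < m\<close> show "(\<Sum>t\<in>J. y t * v t ^ 2 ^ (0 + j)) = 0"
      by (simp add: check_code_def)
  qed
  ultimately have "\<forall>t\<in>J. y t = 0" by (rule moore_system_trivial[OF char finJ cardJ])
  then have "y = 0" by (auto simp: J_def fun_eq_iff)
  with y(2) show False ..
qed

lemma check_code_frobenius_heavy_iff:
  fixes v :: "'i \<Rightarrow> 'a::field"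
  assumes char: "CHAR('a) = 2" and P: "finite P"
  shows "(\<forall>y\<in>check_code P (\<lambda>j t. v t ^ 2 ^ j) m. y \<noteq> 0 \<longrightarrow> m < hweight y)
         \<longleftrightarrow> hwise_indep m v P"
proof
  show "hwise_indep m v P" if "\<forall>y\<in>check_code P (\<lambda>j t. v t ^ 2 ^ j) m. y \<noteq> 0 \<longrightarrow> m < hweight y"
    using heavy_imp_hwise_indep[OF char P that] .
  show "\<forall>y\<in>check_code P (\<lambda>j t. v t ^ 2 ^ j) m. y \<noteq> 0 \<longrightarrow> m < hweight y"
    if "hwise_indep m v P"
    using hwise_indep_imp_heavy[OF char P that] by blast
qed

lemma sum_eliminate_row:
  fixes a f :: "'s \<Rightarrow> 'a::field"
  assumes char: "CHAR('a) = 2" and S: "finite S" "e \<in> S" and f: "sum f S = 0"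
  shows "(\<Sum>s\<in>S. a s ^ 2 ^ k * f s) = (\<Sum>s\<in>S - {e}. (a s + a e) ^ 2 ^ k * f s)"
proof -
  have fe: "f e = - (\<Sum>s\<in>S - {e}. f s)"
    using f S by (simp add: sum.remove eq_neg_iff_add_eq_0)
  have "(\<Sum>s\<in>S. a s ^ 2 ^ k * f s) = a e ^ 2 ^ k * f e + (\<Sum>s\<in>S - {e}. a s ^ 2 ^ k * f s)"
    using S by (rule sum.remove)
  also have "\<dots> = (\<Sum>s\<in>S - {e}. (a s ^ 2 ^ k - a e ^ 2 ^ k) * f s)"
    by (simp add: fe sum_distrib_left left_diff_distrib sum_subtractf)
  also have "\<dots> = (\<Sum>s\<in>S - {e}. (a s + a e) ^ 2 ^ k * f s)"
    using char by (simp add: minus_CHAR_2 freshmans_dream')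
  finally show ?thesis .
qed

lemma sum_coords: "(\<Sum>t\<in>coords l r. g t) = (\<Sum>i<l. \<Sum>s<r + 1. g (i, s))"
  by (simp add: coords_def sum.cartesian_product lessThan_def)

lemma sum_punct_coords:
  "(\<Sum>t\<in>punct_coords l r e. g t) = (\<Sum>i<l. \<Sum>s\<in>{..<r + 1} - {e i}. g (i, s))"
proof -
  have "punct_coords l r e = Sigma {..<l} (\<lambda>i. {..<r + 1} - {e i})"
    by (auto simp: punct_coords_def)
  then show ?thesis by (simp add: sum.Sigma)
qed

lemma card_punct_coords:
  assumes "\<forall>i<l. e i < r + 1"
  shows "card (punct_coords l r e) = l * r"
  using sum_punct_coords[of "\<lambda>_. 1 :: nat" l r e] assms by simp

lemma code_C_check_punctured:
  fixes \<alpha> :: "nat \<Rightarrow> nat \<Rightarrow> 'a::field"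
  assumes char: "CHAR('a) = 2" and e: "\<forall>i<l. e i < r + 1"
    and rows: "\<forall>i<l. (\<Sum>s<r + 1. x (i, s)) = 0"
  shows "(\<Sum>(i, s)\<in>coords l r. \<alpha> i s ^ 2 ^ k * x (i, s))
       = (\<Sum>t\<in>punct_coords l r e. (\<lambda>(i, s). \<alpha> i s + \<alpha> i (e i)) t ^ 2 ^ k * x t)"
proof -
  have "(\<Sum>s<r + 1. \<alpha> i s ^ 2 ^ k * x (i, s))
      = (\<Sum>s\<in>{..<r + 1} - {e i}. (\<alpha> i s + \<alpha> i (e i)) ^ 2 ^ k * x (i, s))" if "i < l" for i
    by (rule sum_eliminate_row[OF char]) (use e rows that in auto)
  then show ?thesis
    unfolding sum_coords sum_punct_coords prod.case by (rule sum.cong[OF refl]) simp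
qed

lemma code_C_iff:
  "x \<in> code_C l r h \<alpha> \<longleftrightarrow> (\<forall>p. p \<notin> coords l r \<longrightarrow> x p = 0)
     \<and> (\<forall>j<h. (\<Sum>(i, s)\<in>coords l r. \<alpha> i s ^ 2 ^ j * x (i, s)) = 0)
     \<and> (\<forall>i<l. (\<Sum>s<r + 1. x (i, s)) = 0)"
  unfolding code_C_def by (auto simp: Ball_def Suc_le_eq)

lemma puncture_code_C_subset:
  fixes \<alpha> :: "nat \<Rightarrow> nat \<Rightarrow> 'a::field"
  assumes char: "CHAR('a) = 2" and e: "\<forall>i<l. e i < r + 1"
  shows "puncture (punct_coords l r e) (code_C l r h \<alpha>)
       \<subseteq> check_code (punct_coords l r e) (\<lambda>j t. (\<lambda>(i, s). \<alpha> i s + \<alpha> i (e i)) t ^ 2 ^ j) h"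
    (is "puncture ?P ?C \<subseteq> check_code ?P ?H h")
proof
  fix y assume "y \<in> puncture ?P ?C"
  then obtain x where x: "x \<in> ?C" and y: "y = (\<lambda>p. if p \<in> ?P then x p else 0)"
    by (auto simp: puncture_def)
  have rows: "\<forall>i<l. (\<Sum>s<r + 1. x (i, s)) = 0" using x by (simp add: code_C_iff)
  have "(\<Sum>t\<in>?P. ?H j t * y t) = 0" if "j < h" for j
  proof -
    have "(\<Sum>t\<in>?P. ?H j t * y t) = (\<Sum>t\<in>?P. ?H j t * x t)" by (simp add: y)
    also have "\<dots> = (\<Sum>(i, s)\<in>coords l r. \<alpha> i s ^ 2 ^ j * x (i, s))"
      by (rule code_C_check_punctured[OF char e rows, symmetric])
    also have "\<dots> = 0" using x that by (simp add: code_C_iff)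
    finally show ?thesis .
  qed
  then show "y \<in> check_code ?P ?H h" by (simp add: check_code_def y)
qed

text \<open>Conversely, a word on the punctured coordinates extends to \<open>code_C\<close> by filling in each
  deleted position with the value that makes its row sum vanish.\<close>
lemma check_code_subset_puncture_code_C:
  fixes \<alpha> :: "nat \<Rightarrow> nat \<Rightarrow> 'a::field"
  assumes char: "CHAR('a) = 2" and e: "\<forall>i<l. e i < r + 1"
  shows "check_code (punct_coords l r e) (\<lambda>j t. (\<lambda>(i, s). \<alpha> i s + \<alpha> i (e i)) t ^ 2 ^ j) h
       \<subseteq> puncture (punct_coords l r e) (code_C l r h \<alpha>)"
    (is "check_code ?P ?H h \<subseteq> puncture ?P ?C")
proof
  fix y assume yK: "y \<in> check_code ?P ?H h"
  have y0: "\<forall>p. p \<notin> ?P \<longrightarrow> y p = 0" using yK by (simp add: check_code_def)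
  define x where "x = (\<lambda>(i, s). if i < l \<and> s = e i
      then - (\<Sum>s'\<in>{..<r + 1} - {e i}. y (i, s')) else y (i, s))"
  have xP: "x t = y t" if "t \<in> ?P" for t using that by (auto simp: x_def punct_coords_def)
  have rows: "\<forall>i<l. (\<Sum>s<r + 1. x (i, s)) = 0"
  proof (intro allI impI)
    fix i assume i: "i < l"
    have "(\<Sum>s<r + 1. x (i, s)) = x (i, e i) + (\<Sum>s\<in>{..<r + 1} - {e i}. x (i, s))"
      using e i by (intro sum.remove) auto
    also have "(\<Sum>s\<in>{..<r + 1} - {e i}. x (i, s)) = (\<Sum>s\<in>{..<r + 1} - {e i}. y (i, s))"
      using i by (intro sum.cong) (auto simp: x_def)
    finally show "(\<Sum>s<r + 1. x (i, s)) = 0" using i by (simp add: x_def)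
  qed
  have "x \<in> ?C"
    unfolding code_C_iff
  proof (intro conjI allI impI)
    fix p assume "p \<notin> coords l r"
    then show "x p = 0" using y0 e by (cases p) (auto simp: x_def coords_def punct_coords_def)
  next
    fix j assume "j < h"
    have "(\<Sum>(i, s)\<in>coords l r. \<alpha> i s ^ 2 ^ j * x (i, s)) = (\<Sum>t\<in>?P. ?H j t * x t)"
      by (rule code_C_check_punctured[OF char e rows])
    also have "\<dots> = (\<Sum>t\<in>?P. ?H j t * y t)" using xP by simp
    also have "\<dots> = 0" using yK \<open>j < h\<close> by (simp add: check_code_def)
    finally show "(\<Sum>(i, s)\<in>coords l r. \<alpha> i s ^ 2 ^ j * x (i, s)) = 0" .
  qed (use rows in simp)
  moreover have "y = (\<lambda>p. if p \<in> ?P then x p else 0)"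
    using y0 xP by (auto simp: fun_eq_iff)
  ultimately show "y \<in> puncture ?P ?C" by (auto simp: puncture_def)
qed

theorem proposition10:
  fixes \<alpha> :: "nat \<Rightarrow> nat \<Rightarrow> 'a::{field,finite}"
    and l r h :: nat and e :: "nat \<Rightarrow> nat"
  assumes "CHAR('a) = 2"
    and "l > 0" and "r > 0" and "h > 0"
    and "h \<le> l * r"
    and "\<forall>i<l. e i < r + 1"
  shows "is_mds (l * r) (l * r - h) (puncture (punct_coords l r e) (code_C l r h \<alpha>))
     \<longleftrightarrow> hwise_indep h (\<lambda>(i,s). \<alpha> i s + \<alpha> i (e i)) (punct_coords l r e)"
proof -
  let ?P = "punct_coords l r e"
  have fin: "finite ?P"
    by (rule finite_subset[of _ "{..<l} \<times> {..<r + 1}"]) (auto simp: punct_coords_def)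
  have "puncture ?P (code_C l r h \<alpha>)
      = check_code ?P (\<lambda>j t. (\<lambda>(i, s). \<alpha> i s + \<alpha> i (e i)) t ^ 2 ^ j) h"
    using puncture_code_C_subset[OF assms(1,6)] check_code_subset_puncture_code_C[OF assms(1,6)]
    by (rule equalityI)
  then show ?thesis
    by (simp only: is_mds_check_code_iff[OF fin card_punct_coords[OF assms(6)] assms(5)]
        check_code_frobenius_heavy_iff[OF assms(1) fin])
qed

end
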